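(* Let $m,q\ge1$ and let $r=(r_1,\dots,r_q)$ with $r_1,\dots,r_q$ i.i.d. $\mathrm{Exp}(1)$. For any distributions $\mu_1,\dots,\mu_m\in\Delta_q$, $$\mathbb P_r\big[\exists i,j\in[m]:\ \mathrm{GumbelTrick}(\mu_i,r)\ne\mathrm{GumbelTrick}(\mu_j,r)\big]\le\frac{\sum_{x\in[q]}\big(\max_{i\in[m]}\mu_i(x)-\min_{i\in[m]}\mu_i(x)\big)}{\sum_{x\in[q]}\max_{i\in[m]}\mu_i(x)}.$$
   Context: $\Delta_q$ is the probability simplex on $[q]$. $\mathrm{GumbelTrick}(\nu,r)$ outputs $\arg\min\{r_x/\nu(x): x\in[q]\}$ (with $r_x/0=+\infty$; ties occur with probability zero). *)

theory Defs
  imports "HOL-Probability.Probability"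
begin

definition prob_simplex :: "nat \<Rightarrow> (nat \<Rightarrow> real) set" where
  "prob_simplex q = {\<nu>. (\<forall>x<q. 0 \<le> \<nu> x) \<and> (\<Sum>x<q. \<nu> x) = 1}"

definition gumbel_ratio :: "(nat \<Rightarrow> real) \<Rightarrow> (nat \<Rightarrow> real) \<Rightarrow> nat \<Rightarrow> ereal" where
  "gumbel_ratio \<nu> r x = (if \<nu> x = 0 then \<infinity> else ereal (r x / \<nu> x))"

text \<open>GumbelTrick: argmin of r_x / nu(x) over x in [q]; ties (probability zero)
  are broken towards the smallest index.\<close>
definition GumbelTrick :: "nat \<Rightarrow> (nat \<Rightarrow> real) \<Rightarrow> (nat \<Rightarrow> real) \<Rightarrow> nat" where
  "GumbelTrick q \<nu> r = (LEAST x. x < q \<and> (\<forall>y<q. gumbel_ratio \<nu> r x \<le> gumbel_ratio \<nu> r y))"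

definition exp_iid :: "nat \<Rightarrow> (nat \<Rightarrow> real) measure" where
  "exp_iid q = PiM {..<q} (\<lambda>_. density lborel (exponential_density 1))"

end

theory Submission
  imports Defs
begin

(*
  Let L(x) and M(x) be the minimum and the maximum of the \<mu>_i(x). On the event that
  r_x / L(x) < r_y / M(y) for all y \<noteq> x, the coordinate x minimises r_y / \<mu>_i(y) for every i,
  so all the Gumbel samples equal x; these events are disjoint for distinct x. As r_x / L(x) and
  the r_y / M(y) are independent exponentials of rates L(x) and M(y), the event for x has
  probability L(x) / (L(x) + \<Sum>_{y \<noteq> x} M(y)) \<ge> L(x) / \<Sum>_y M(y). Hence the samples disagree
  with probability at most 1 - \<Sum>_x L(x) / \<Sum>_x M(x).
*)

lemma nn_integral_exponential_density_mult_exp: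
  fixes a b :: real
  assumes a: "0 < a" and b: "0 < b"
  shows "(\<integral>\<^sup>+ s. ennreal (exponential_density a s) * ennreal (exp (- s * b)) \<partial>lborel)
    = ennreal (a / (a + b))"
proof -
  interpret E: prob_space "density lborel (exponential_density (a + b))"
    using a b by (intro prob_space_exponential_density) simp
  have "exponential_density a s * exp (- s * b) = a / (a + b) * exponential_density (a + b) s"
    for s using a b by (auto simp: exponential_density_def field_simps mult_exp_exp)
  then have "(\<integral>\<^sup>+ s. ennreal (exponential_density a s) * ennreal (exp (- s * b)) \<partial>lborel)
      = (\<integral>\<^sup>+ s. ennreal (a / (a + b)) * ennreal (exponential_density (a + b) s) \<partial>lborel)"
    using a b by (intro nn_integral_cong) (simp add: ennreal_mult'[symmetric] exponential_density_nonneg)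
  also have "\<dots> = ennreal (a / (a + b)) * emeasure (density lborel (exponential_density (a + b))) UNIV"
    by (subst nn_integral_cmult) (auto simp: emeasure_density)
  finally show ?thesis
    using E.emeasure_space_1 by simp
qed

lemma (in prob_space) prob_exponential_less:
  fixes A B :: "'a \<Rightarrow> real"
  assumes a: "0 < a" and b: "0 < b"
    and A: "distributed M lborel A (exponential_density a)"
    and B: "distributed M lborel B (exponential_density b)"
    and ind: "indep_var borel A borel B"
  shows "prob {\<omega>\<in>space M. A \<omega> < B \<omega>} = a / (a + b)"
proof -
  let ?DA = "distr M borel A" and ?DB = "distr M borel B"
  let ?S = "{(s::real, t::real). s < t}"
  have [measurable]: "A \<in> borel_measurable M" "B \<in> borel_measurable M"
    using ind by (auto simp: indep_var_distribution_eq)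
  have DA: "?DA = density lborel (exponential_density a)"
    using A by (simp add: distributed_def cong: distr_cong)
  interpret DB: prob_space ?DB by (rule prob_space_distr) simp
  have S: "?S \<in> sets (borel \<Otimes>\<^sub>M borel)"
  proof -
    have "{x\<in>space (borel \<Otimes>\<^sub>M borel). fst x < (snd x::real)} \<in> sets (borel \<Otimes>\<^sub>M (borel::real measure))"
      by measurable
    then show ?thesis by (simp add: space_pair_measure case_prod_beta')
  qed
  have tail: "emeasure ?DB (Pair s -` ?S) = ennreal (exp (- s * b))" if "0 \<le> s" for s
  proof -
    have "emeasure ?DB (Pair s -` ?S) = emeasure M {\<omega>\<in>space M. s < B \<omega>}"
      by (subst emeasure_distr) (auto intro!: arg_cong[where f="emeasure M"])
    then show ?thesis
      using exponential_distributedD_gt[OF B that b] by (simp add: emeasure_eq_measure)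
  qed
  have "AE s in ?DA. 0 \<le> s"
    unfolding DA by (subst AE_density) (auto simp: exponential_density_def)
  then have "AE s in ?DA. emeasure ?DB (Pair s -` ?S) = ennreal (exp (- s * b))"
    by (rule eventually_mono) (rule tail)
  have "emeasure M {\<omega>\<in>space M. A \<omega> < B \<omega>} = emeasure (distr M (borel \<Otimes>\<^sub>M borel) (\<lambda>x. (A x, B x))) ?S"
    using S by (subst emeasure_distr) (auto intro!: arg_cong[where f="emeasure M"])
  also have "\<dots> = emeasure (?DA \<Otimes>\<^sub>M ?DB) ?S"
    using ind by (simp add: indep_var_distribution_eq)
  also have "\<dots> = (\<integral>\<^sup>+ s. emeasure ?DB (Pair s -` ?S) \<partial>?DA)"
    using S by (intro DB.emeasure_pair_measure_alt) (simp cong: sets_pair_measure_cong)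
  also have "\<dots> = (\<integral>\<^sup>+ s. ennreal (exp (- s * b)) \<partial>?DA)"
    by (rule nn_integral_cong_AE) fact
  also have "\<dots> = ennreal (a / (a + b))"
    unfolding DA using nn_integral_exponential_density_mult_exp[OF a b] by (simp add: nn_integral_density)
  finally show ?thesis
    using a b by (simp add: emeasure_eq_measure)
qed

lemma AE_exponential_distributed_nonneg:
  assumes "distributed M lborel X (exponential_density l)"
  shows "AE \<omega> in M. 0 \<le> X \<omega>"
proof -
  have "AE s in density lborel (exponential_density l). 0 \<le> s"
    by (subst AE_density) (auto simp: exponential_density_def)
  moreover have "distr M lborel X = density lborel (exponential_density l)"
    using assms by (simp add: distributed_def)
  ultimately have "AE s in distr M lborel X. 0 \<le> s"
    by (simp only:)
  then show ?thesis
    using AE_distrD[OF distributed_measurable[OF assms]] by simp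
qed

lemma (in prob_space) prob_exponential_less_Min:
  fixes X :: "'i \<Rightarrow> 'a \<Rightarrow> real"
  assumes J: "finite J" "J \<noteq> {}" "x \<notin> J" and l: "\<And>y. y \<in> insert x J \<Longrightarrow> 0 < l y"
    and dist: "\<And>y. y \<in> insert x J \<Longrightarrow> distributed M lborel (X y) (exponential_density (l y))"
    and ind: "indep_vars (\<lambda>_. borel) X (insert x J)"
  shows "prob {\<omega>\<in>space M. X x \<omega> < Min ((\<lambda>y. X y \<omega>) ` J)} = l x / (l x + (\<Sum>y\<in>J. l y))"
proof (rule prob_exponential_less)
  show "0 < l x" "0 < sum l J"
    using J l by (auto intro!: sum_pos)
  show "distributed M lborel (X x) (exponential_density (l x))"
    by (rule dist) simp
  show "distributed M lborel (\<lambda>\<omega>. Min ((\<lambda>y. X y \<omega>) ` J)) (exponential_density (sum l J))"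
    using J l dist by (intro exponential_distributed_Min indep_vars_subset[OF ind]) auto
  show "indep_var borel (X x) borel (\<lambda>\<omega>. Min ((\<lambda>y. X y \<omega>) ` J))"
    using J ind by (intro indep_vars_Min) auto
qed

lemma (in prob_space) exponential_distributed_divide:
  assumes "distributed M lborel X (exponential_density 1)" and "0 < c"
  shows "distributed M lborel (\<lambda>\<omega>. X \<omega> / c) (exponential_density c)"
  using erlang_distributed_mult_const[OF assms(1), of "inverse c"] assms(2)
  by (simp add: field_simps)

lemma (in prob_space) prob_exponential_ratio_less_all:
  fixes X :: "'i \<Rightarrow> 'a \<Rightarrow> real" and w :: "'i \<Rightarrow> real"
  assumes J: "finite J" "J \<noteq> {}" "x \<notin> J" and w: "\<And>y. y \<in> insert x J \<Longrightarrow> 0 < w y"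
    and dist: "\<And>y. y \<in> insert x J \<Longrightarrow> distributed M lborel (X y) (exponential_density 1)"
    and ind: "indep_vars (\<lambda>_. borel) X (insert x J)"
  shows "prob {\<omega>\<in>space M. 0 \<le> X x \<omega> \<and> (\<forall>y\<in>J. X x \<omega> / w x < X y \<omega> / w y)}
    = w x / (w x + (\<Sum>y\<in>J. w y))"
proof -
  define Z where "Z y \<omega> = X y \<omega> / w y" for y \<omega>
  have [measurable]: "X x \<in> borel_measurable M"
    using distributed_measurable[OF dist] by simp
  have [measurable]: "Z x \<in> borel_measurable M" "(\<lambda>\<omega>. Min ((\<lambda>y. Z y \<omega>) ` J)) \<in> borel_measurable M"
    using J distributed_measurable[OF dist] unfolding Z_def by (auto intro!: borel_measurable_Min)
  have "indep_vars (\<lambda>_. borel) Z (insert x J)"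
    unfolding Z_def by (rule indep_vars_compose2[OF ind]) auto
  then have "prob {\<omega>\<in>space M. Z x \<omega> < Min ((\<lambda>y. Z y \<omega>) ` J)} = w x / (w x + (\<Sum>y\<in>J. w y))"
    using J w exponential_distributed_divide[OF dist w]
    unfolding Z_def[abs_def] by (intro prob_exponential_less_Min) auto
  moreover have "prob {\<omega>\<in>space M. 0 \<le> X x \<omega> \<and> Z x \<omega> < Min ((\<lambda>y. Z y \<omega>) ` J)}
      = prob {\<omega>\<in>space M. Z x \<omega> < Min ((\<lambda>y. Z y \<omega>) ` J)}"
    using AE_exponential_distributed_nonneg[OF dist[OF insertI1]]
    by (intro prob_eq_AE) (auto elim: eventually_mono)
  ultimately show ?thesis
    using J by (simp add: Z_def)
qed

lemma (in prob_space) prob_exponential_ratio_argmin: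
  fixes X :: "'i \<Rightarrow> 'a \<Rightarrow> real" and w :: "'i \<Rightarrow> real"
  assumes I: "finite I" "x \<in> I"
    and dist: "\<And>y. y \<in> I \<Longrightarrow> distributed M lborel (X y) (exponential_density 1)"
    and ind: "indep_vars (\<lambda>_. borel) X I"
    and w: "\<And>y. y \<in> I \<Longrightarrow> 0 \<le> w y" "0 < w x"
  shows "prob {\<omega>\<in>space M. 0 \<le> X x \<omega> \<and>
      (\<forall>y\<in>I - {x}. 0 < w y \<longrightarrow> X x \<omega> / w x < X y \<omega> / w y)} = w x / (\<Sum>y\<in>I. w y)"
    (is "prob ?E = _")
proof -
  define J where "J = {y \<in> I - {x}. 0 < w y}"
  have J: "finite J" "x \<notin> J" "insert x J \<subseteq> I"
    using I by (auto simp: J_def)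
  have "(\<Sum>y\<in>I. w y) = (\<Sum>y\<in>insert x J. w y)"
    using J I w by (intro sum.mono_neutral_right) (auto simp: J_def intro: antisym)
  then have sum_w: "(\<Sum>y\<in>I. w y) = w x + (\<Sum>y\<in>J. w y)"
    using J by simp
  have E: "?E = {\<omega>\<in>space M. 0 \<le> X x \<omega> \<and> (\<forall>y\<in>J. X x \<omega> / w x < X y \<omega> / w y)}"
    by (auto simp: J_def)
  show ?thesis
  proof (cases "J = {}")
    case True
    have [measurable]: "X x \<in> borel_measurable M"
      using distributed_measurable[OF dist[OF I(2)]] by simp
    have "prob {\<omega>\<in>space M. 0 \<le> X x \<omega>} = 1"
      using AE_exponential_distributed_nonneg[OF dist[OF I(2)]] by (subst prob_Collect_eq_1) auto
    then show ?thesis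
      using E True sum_w w by simp
  next
    case False
    show ?thesis
      unfolding E sum_w using False J I w
      by (intro prob_exponential_ratio_less_all dist indep_vars_subset[OF ind]) (auto simp: J_def)
  qed
qed

lemma indep_vars_PiM_components:
  assumes M: "\<And>i. i \<in> I \<Longrightarrow> prob_space (M i)" and I: "I \<noteq> {}"
  shows "prob_space.indep_vars (PiM I M) M (\<lambda>i \<omega>. \<omega> i) I"
proof -
  interpret P: prob_space "PiM I M"
    using M by (rule prob_space_PiM)
  have "distr (PiM I M) (PiM I M) (\<lambda>\<omega>. restrict \<omega> I) = distr (PiM I M) (PiM I M) (\<lambda>\<omega>. \<omega>)"
    by (rule distr_cong) (auto simp: space_PiM)
  also have "\<dots> = PiM I (\<lambda>i. distr (PiM I M) (M i) (\<lambda>\<omega>. \<omega> i))"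
    using M by (auto intro!: PiM_cong distr_PiM_component[symmetric])
  finally show ?thesis
    using I by (subst P.indep_vars_iff_distr_eq_PiM') auto
qed

lemma prob_space_exp_iid: "prob_space (exp_iid q)"
  unfolding exp_iid_def by (intro prob_space_PiM prob_space_exponential_density) simp

lemma distributed_exp_iid_component:
  assumes "y < q"
  shows "distributed (exp_iid q) lborel (\<lambda>r. r y) (exponential_density 1)"
proof -
  let ?E = "density lborel (exponential_density 1)"
  have "distr (exp_iid q) lborel (\<lambda>r. r y) = distr (exp_iid q) ?E (\<lambda>r. r y)"
    by (rule distr_cong) auto
  also have "\<dots> = ?E"
    unfolding exp_iid_def using assms by (intro distr_PiM_component prob_space_exponential_density) auto
  finally show ?thesis
    using assms by (auto simp: distributed_def exp_iid_def cong: measurable_cong_sets)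
qed

lemma measurable_exp_iid_component [measurable]: "(\<lambda>r. r y) \<in> borel_measurable (exp_iid q)"
proof (cases "y < q")
  case True
  then show ?thesis
    using distributed_measurable[OF distributed_exp_iid_component] by simp
next
  case False
  then have "r y = undefined" if "r \<in> space (exp_iid q)" for r
    using that by (auto simp: exp_iid_def space_PiM PiE_def extensional_def)
  then show ?thesis
    by (subst measurable_cong[where g="\<lambda>_. undefined"]) auto
qed

lemma indep_vars_exp_iid_components:
  assumes "0 < q"
  shows "prob_space.indep_vars (exp_iid q) (\<lambda>_. borel) (\<lambda>y r. r y) {..<q}"
proof -
  have "prob_space.indep_vars (exp_iid q) (\<lambda>_. density lborel (exponential_density 1)) (\<lambda>y r. r y) {..<q}"
    unfolding exp_iid_def using assms
    by (intro indep_vars_PiM_components prob_space_exponential_density) auto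
  then show ?thesis
    by (simp add: prob_space.indep_vars_def[OF prob_space_exp_iid] cong: measurable_cong_sets)
qed

lemma GumbelTrick_eq_strict_argmin:
  assumes "x < q" and "\<And>y. y < q \<Longrightarrow> y \<noteq> x \<Longrightarrow> gumbel_ratio \<nu> r x < gumbel_ratio \<nu> r y"
  shows "GumbelTrick q \<nu> r = x"
  unfolding GumbelTrick_def
proof (rule Least_equality)
  show "x < q \<and> (\<forall>y<q. gumbel_ratio \<nu> r x \<le> gumbel_ratio \<nu> r y)"
    using assms by (metis order.order_iff_strict)
  show "x \<le> z" if "z < q \<and> (\<forall>y<q. gumbel_ratio \<nu> r z \<le> gumbel_ratio \<nu> r y)" for z
    using that assms by (metis leD linorder_le_cases)
qed

lemma GumbelTrick_eqI:
  fixes \<nu> M :: "nat \<Rightarrow> real"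
  assumes x: "x < q" and l: "0 < l" "l \<le> \<nu> x"
    and \<nu>: "\<And>y. y < q \<Longrightarrow> 0 \<le> \<nu> y" "\<And>y. y < q \<Longrightarrow> \<nu> y \<le> M y"
    and r: "0 \<le> r x" "\<And>y. y < q \<Longrightarrow> y \<noteq> x \<Longrightarrow> 0 < M y \<Longrightarrow> r x / l < r y / M y"
  shows "GumbelTrick q \<nu> r = x"
proof (rule GumbelTrick_eq_strict_argmin[OF x])
  fix y assume y: "y < q" "y \<noteq> x"
  show "gumbel_ratio \<nu> r x < gumbel_ratio \<nu> r y"
  proof (cases "\<nu> y = 0")
    case True
    then show ?thesis using l by (simp add: gumbel_ratio_def)
  next
    case False
    then have \<nu>y: "0 < \<nu> y" and My: "0 < M y"
      using \<nu>[OF y(1)] by auto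
    have "r x / \<nu> x \<le> r x / l"
      using l r(1) by (intro divide_left_mono) auto
    also have "\<dots> < r y / M y"
      using r(2)[OF y My] .
    also have "\<dots> \<le> r y / \<nu> y"
    proof -
      have "0 \<le> r x / l" using l r(1) by simp
      then have "0 < r y / M y" using r(2)[OF y My] by linarith
      then have "0 < r y" using My by (simp add: zero_less_divide_iff)
      then show ?thesis using \<nu>y \<nu>(2)[OF y(1)] by (intro divide_left_mono) auto
    qed
    finally show ?thesis
      using \<nu>y l by (simp add: gumbel_ratio_def)
  qed
qed

lemma (in prob_space) prob_le_one_minus_sum_disjoint:
  assumes "finite X" "disjoint_family_on E X" "\<And>x. x \<in> X \<Longrightarrow> E x \<in> events"
    and "A \<subseteq> space M - (\<Union>x\<in>X. E x)"
  shows "prob A \<le> 1 - (\<Sum>x\<in>X. prob (E x))"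
proof -
  have "prob A \<le> prob (space M - (\<Union>x\<in>X. E x))"
    using assms by (intro finite_measure_mono) auto
  also have "\<dots> = 1 - prob (\<Union>x\<in>X. E x)"
    using assms by (intro prob_compl) auto
  also have "prob (\<Union>x\<in>X. E x) = (\<Sum>x\<in>X. prob (E x))"
    using assms by (intro finite_measure_finite_Union) auto
  finally show ?thesis .
qed

(* A coordinate y with M(y) = 0 has ratio \<infinity> under every \<nu> \<le> M, so it does not compete. *)
definition winner_event :: "nat \<Rightarrow> (nat \<Rightarrow> real) \<Rightarrow> (nat \<Rightarrow> real) \<Rightarrow> nat \<Rightarrow> (nat \<Rightarrow> real) set" where
  "winner_event q L M x = {r \<in> space (exp_iid q). 0 \<le> r x \<and>
     (\<forall>y\<in>{..<q} - {x}. 0 < M y \<longrightarrow> r x / L x < r y / M y)}"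

lemma winner_event_in_sets [measurable]: "winner_event q L M x \<in> sets (exp_iid q)"
  unfolding winner_event_def by measurable

lemma GumbelTrick_eq_if_winner_event:
  assumes x: "x < q" "0 < L x" and r: "r \<in> winner_event q L M x"
    and \<nu>: "\<And>y. y < q \<Longrightarrow> 0 \<le> L y \<and> L y \<le> \<nu> y \<and> \<nu> y \<le> M y"
  shows "GumbelTrick q \<nu> r = x"
  using assms by (intro GumbelTrick_eqI[where l="L x" and M=M]) (force simp: winner_event_def)+

lemma measure_winner_event_ge:
  assumes x: "x < q" "0 < L x" and L: "\<And>y. y < q \<Longrightarrow> 0 \<le> L y \<and> L y \<le> M y"
  shows "L x / (\<Sum>y<q. M y) \<le> measure (exp_iid q) (winner_event q L M x)"
proof -
  interpret P: prob_space "exp_iid q"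
    by (rule prob_space_exp_iid)
  let ?w = "M(x := L x)"
  have "P.prob {r \<in> space (exp_iid q). 0 \<le> r x \<and>
      (\<forall>y\<in>{..<q} - {x}. 0 < ?w y \<longrightarrow> r x / ?w x < r y / ?w y)} = ?w x / (\<Sum>y<q. ?w y)"
    using x L by (intro P.prob_exponential_ratio_argmin distributed_exp_iid_component
        indep_vars_exp_iid_components) (auto intro: order_trans)
  then have "P.prob (winner_event q L M x) = L x / (\<Sum>y<q. ?w y)"
    by (simp add: winner_event_def)
  moreover have "(\<Sum>y<q. ?w y) \<le> (\<Sum>y<q. M y)"
    using L x by (intro sum_mono) auto
  moreover have "L x \<le> (\<Sum>y<q. ?w y)"
    using member_le_sum[of x "{..<q}" ?w] x L by (force intro: order_trans)
  ultimately show ?thesis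
    using x by (auto intro!: divide_left_mono)
qed

lemma measure_GumbelTrick_disagree_le:
  fixes \<nu> :: "'i \<Rightarrow> nat \<Rightarrow> real" and L M :: "nat \<Rightarrow> real"
  assumes \<nu>: "\<And>i y. i \<in> I \<Longrightarrow> y < q \<Longrightarrow> L y \<le> \<nu> i y \<and> \<nu> i y \<le> M y"
    and L: "\<And>y. y < q \<Longrightarrow> 0 \<le> L y \<and> L y \<le> M y"
    and S: "0 < (\<Sum>y<q. M y)"
  shows "measure (exp_iid q)
      {r \<in> space (exp_iid q). \<exists>i\<in>I. \<exists>j\<in>I. GumbelTrick q (\<nu> i) r \<noteq> GumbelTrick q (\<nu> j) r}
    \<le> 1 - (\<Sum>y<q. L y) / (\<Sum>y<q. M y)"
    (is "measure _ ?D \<le> _")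
proof -
  interpret P: prob_space "exp_iid q"
    by (rule prob_space_exp_iid)
  define X where "X = {x. x < q \<and> 0 < L x}"
  let ?E = "winner_event q L M"
  have winner: "GumbelTrick q \<nu>' r = x"
    if "x \<in> X" "r \<in> ?E x" "\<And>y. y < q \<Longrightarrow> L y \<le> \<nu>' y \<and> \<nu>' y \<le> M y" for x r \<nu>'
    using that L by (intro GumbelTrick_eq_if_winner_event) (auto simp: X_def)
  have "?D \<subseteq> space (exp_iid q) - (\<Union>x\<in>X. ?E x)"
    using winner \<nu> by fastforce
  \<comment> \<open>L itself lies between L and M, so the events are disjoint.\<close>
  moreover have "disjoint_family_on ?E X"
    unfolding disjoint_family_on_def
  proof (intro ballI impI)
    fix x x' assume "x \<in> X" "x' \<in> X" "x \<noteq> x'"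
    then show "?E x \<inter> ?E x' = {}"
      using winner[of x _ L] winner[of x' _ L] L by force
  qed
  ultimately have "P.prob ?D \<le> 1 - (\<Sum>x\<in>X. P.prob (?E x))"
    by (intro P.prob_le_one_minus_sum_disjoint) (auto simp: X_def)
  also have "\<dots> \<le> 1 - (\<Sum>x\<in>X. L x / (\<Sum>y<q. M y))"
    by (intro diff_left_mono sum_mono measure_winner_event_ge) (auto simp: X_def L)
  also have "(\<Sum>x\<in>X. L x / (\<Sum>y<q. M y)) = (\<Sum>y<q. L y) / (\<Sum>y<q. M y)"
    using L by (auto simp: X_def sum_divide_distrib less_le intro!: sum.mono_neutral_left)
  finally show ?thesis .
qed

lemma one_le_sum_Max_prob_simplex:
  fixes \<mu> :: "nat \<Rightarrow> nat \<Rightarrow> real"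
  assumes "i < m" and "\<And>i. i < m \<Longrightarrow> \<mu> i \<in> prob_simplex q"
  shows "1 \<le> (\<Sum>x<q. Max ((\<lambda>i. \<mu> i x) ` {..<m}))"
proof -
  have "1 = (\<Sum>x<q. \<mu> i x)"
    using assms by (simp add: prob_simplex_def)
  also have "\<dots> \<le> (\<Sum>x<q. Max ((\<lambda>i. \<mu> i x) ` {..<m}))"
    using assms(1) by (intro sum_mono Max_ge) auto
  finally show ?thesis .
qed

theorem lemma2p10:
  fixes m q :: nat and \<mu> :: "nat \<Rightarrow> nat \<Rightarrow> real"
  assumes "m \<ge> 1" and "q \<ge> 1"
    and "\<And>i. i < m \<Longrightarrow> \<mu> i \<in> prob_simplex q"
  shows "measure (exp_iid q)
           {r \<in> space (exp_iid q). \<exists>i<m. \<exists>j<m. GumbelTrick q (\<mu> i) r \<noteq> GumbelTrick q (\<mu> j) r}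
         \<le> (\<Sum>x<q. Max ((\<lambda>i. \<mu> i x) ` {..<m}) - Min ((\<lambda>i. \<mu> i x) ` {..<m}))
           / (\<Sum>x<q. Max ((\<lambda>i. \<mu> i x) ` {..<m}))"
proof -
  let ?M = "\<lambda>x. Max ((\<lambda>i. \<mu> i x) ` {..<m})" and ?L = "\<lambda>x. Min ((\<lambda>i. \<mu> i x) ` {..<m})"
  have m: "0 < m"
    using assms(1) by simp
  have bounds: "?L x \<le> \<mu> i x \<and> \<mu> i x \<le> ?M x" if "i < m" for i x
    using that by (auto intro: Min_le Max_ge)
  have nonneg: "0 \<le> ?L x" if "x < q" for x
    using assms(1,3) that by (subst Min_ge_iff) (auto simp: prob_simplex_def lessThan_empty_iff)
  have M_ge_1: "1 \<le> (\<Sum>x<q. ?M x)"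
    using m assms(3) by (rule one_le_sum_Max_prob_simplex)
  have "measure (exp_iid q)
      {r \<in> space (exp_iid q). \<exists>i\<in>{..<m}. \<exists>j\<in>{..<m}. GumbelTrick q (\<mu> i) r \<noteq> GumbelTrick q (\<mu> j) r}
    \<le> 1 - (\<Sum>x<q. ?L x) / (\<Sum>x<q. ?M x)"
  proof (rule measure_GumbelTrick_disagree_le)
    show "?L x \<le> \<mu> i x \<and> \<mu> i x \<le> ?M x" if "i \<in> {..<m}" for i x
      using bounds that by simp
    show "0 \<le> ?L x \<and> ?L x \<le> ?M x" if "x < q" for x
      using nonneg[OF that] bounds[OF m, of x] by auto
  qed (use M_ge_1 in auto)
  also have "\<dots> = (\<Sum>x<q. ?M x - ?L x) / (\<Sum>x<q. ?M x)"
    using M_ge_1 by (simp add: sum_subtractf diff_divide_distrib)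
  finally show ?thesis
    unfolding Bex_def lessThan_iff .
qed

end
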